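(* Let $0<L<\widetilde{\mathrm{snr}}$, and let $$p_m=2Q\big(\sqrt{3L}\big),\qquad\text{equivalently}\qquad L=\tfrac13\left[Q^{-1}(p_m/2)\right]^2.$$ Run the scalar modulo scheme for $N$ rounds with a PAM constellation of $M=2^{NR}$ points and the parameters $\alpha,\beta_n,\gamma_n$ given in the context. Then: - each modulo-aliasing event of the coupled system has probability exactly $p_m$; - the error probability satisfies $$p_e\le (N-1)\,p_m+2Q\!\left(\sqrt{\frac{3\,\mathrm{snr}_N}{2^{2NR}-1}}\right),\qquad\text{where}\qquad \mathrm{snr}_N=\mathrm{snr}\left(1+\mathrm{snr}\cdot\frac{1-L\,\widetilde{\mathrm{snr}}^{-1}}{1+L\,\Delta^{-1}}\right)^{N-1}.$$
   Context: Notation. $Q(x)=\frac{1}{\sqrt{2\pi}}\int_x^\infty e^{-u^2/2}du$. Channels. Feedforward channel $Y_n=X_n+Z_n$ with $Z_n\sim\mathcal N(0,\sigma^2)$ and power $P$. Feedback channel $\widetilde Y_n=\widetilde X_n+\widetilde Z_n$ with $\widetilde Z_n\sim\mathcal N(0,\widetilde\sigma^2)$ and power $\widetilde P$. The noises are i.i.d., mutually independent and independent of the message. Set $\mathrm{snr}=P/\sigma^2$, $\widetilde{\mathrm{snr}}=\widetilde P/\widetilde\sigma^2$ and $\Delta=\widetilde{\mathrm{snr}}/\mathrm{snr}$. Modulo. $[x]_d:=x-d\cdot\mathrm{round}(x/d)$ with $d=\sqrt{12\widetilde P}$. Shared dithers $V_n$ are i.i.d. uniform on $[-d/2,d/2)$.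 PAM. The message is mapped to $\Theta\in\{\pm\eta,\dots,\pm(M-1)\eta\}$ with $\eta=\sqrt{3/(M^2-1)}$. Scalar modulo scheme. - $X_1=\sqrt P\Theta$, and $\hat\Theta_1=Y_1/\sqrt P$. - For $n=1,\dots,N-1$: - $\widetilde X_n=[\gamma_n\hat\Theta_n+V_n]_d$; - $\tilde\varepsilon_n=[\widetilde Y_n-\gamma_n\Theta-V_n]_d$; - $X_{n+1}=\alpha\tilde\varepsilon_n$; - $\hat\Theta_{n+1}=\hat\Theta_n-\beta_{n+1}Y_{n+1}$. - Terminal B decodes the PAM point nearest to $\hat\Theta_N$. Parameters: $$\alpha=\sqrt{LP/\widetilde P},\qquad \gamma_n=\sigma_n^{-1}\sqrt{\widetilde P/L-\widetilde\sigma^2},\qquad \beta_{n+1}=\frac{\sigma_n}{\sigma}\cdot\frac{\sqrt{\mathrm{snr}(1-L/\widetilde{\mathrm{snr}})}}{1+\mathrm{snr}},$$ with $$\sigma_n^2=\mathrm{snr}^{-1}\left(1+\mathrm{snr}\cdot\frac{1-L\widetilde{\mathrm{snr}}^{-1}}{1+L\Delta^{-1}}\right)^{1-n}.$$ Coupled system. This is the same system (same message, dithers and noise realizations) with all modulo operations removed. Its modulo-aliasing events are $\{\gamma_n\varepsilon'_n+\widetilde Z_n\notin[-d/2,d/2)\}$ for $n=1,\dots,N-1$, where $\varepsilon'_n$ is the estimation error $\hat\Theta'_n-\Theta$ of the coupled system. *)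

theory Defs
  imports "HOL-Probability.Probability"
begin

definition Qfun :: "real \<Rightarrow> real" where
  "Qfun x = (LBINT u:{x<..}. std_normal_density u)"

text \<open>Centred modulo [x]_d = x - d * round(x/d), values in [-d/2, d/2).\<close>
definition modd :: "real \<Rightarrow> real \<Rightarrow> real" where
  "modd d x = x - d * real_of_int (round (x / d))"

definition pam :: "nat \<Rightarrow> nat \<Rightarrow> real" where
  "pam M k = (2 * real k - (real M - 1)) * sqrt (3 / ((real M)\<^sup>2 - 1))"

text \<open>Channel quantities; sigma, sigmat are noise standard deviations.\<close>
definition snr :: "real \<Rightarrow> real \<Rightarrow> real" where
  "snr P \<sigma> = P / \<sigma>\<^sup>2"

definition Delta :: "real \<Rightarrow> real \<Rightarrow> real \<Rightarrow> real \<Rightarrow> real" where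
  "Delta P \<sigma> Pt \<sigma>t = snr Pt \<sigma>t / snr P \<sigma>"

definition dmod :: "real \<Rightarrow> real" where
  "dmod Pt = sqrt (12 * Pt)"

definition gfac :: "real \<Rightarrow> real \<Rightarrow> real \<Rightarrow> real \<Rightarrow> real \<Rightarrow> real" where
  "gfac P \<sigma> Pt \<sigma>t L =
     1 + snr P \<sigma> * (1 - L / snr Pt \<sigma>t) / (1 + L / Delta P \<sigma> Pt \<sigma>t)"

definition sig :: "real \<Rightarrow> real \<Rightarrow> real \<Rightarrow> real \<Rightarrow> real \<Rightarrow> nat \<Rightarrow> real" where
  "sig P \<sigma> Pt \<sigma>t L n =
     sqrt (inverse (snr P \<sigma>) * gfac P \<sigma> Pt \<sigma>t L powr (1 - real n))"

definition alpha :: "real \<Rightarrow> real \<Rightarrow> real \<Rightarrow> real" where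
  "alpha P Pt L = sqrt (L * P / Pt)"

definition gam :: "real \<Rightarrow> real \<Rightarrow> real \<Rightarrow> real \<Rightarrow> real \<Rightarrow> nat \<Rightarrow> real" where
  "gam P \<sigma> Pt \<sigma>t L n = sqrt (Pt / L - \<sigma>t\<^sup>2) / sig P \<sigma> Pt \<sigma>t L n"

text \<open>betaN ... n is beta_{n+1} of the paper.\<close>
definition betaN :: "real \<Rightarrow> real \<Rightarrow> real \<Rightarrow> real \<Rightarrow> real \<Rightarrow> nat \<Rightarrow> real" where
  "betaN P \<sigma> Pt \<sigma>t L n =
     sig P \<sigma> Pt \<sigma>t L n / \<sigma> * sqrt (snr P \<sigma> * (1 - L / snr Pt \<sigma>t)) / (1 + snr P \<sigma>)"

text \<open>Receiver estimate of the scheme, with modulo map md (md = modd d for the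
  actual scheme, md = id for the coupled system).
  est md ... theta v z zt m  is  hat Theta_{m+1}.\<close>
primrec est :: "(real \<Rightarrow> real) \<Rightarrow> real \<Rightarrow> real \<Rightarrow> real \<Rightarrow> real \<Rightarrow> real \<Rightarrow> real
    \<Rightarrow> (nat \<Rightarrow> real) \<Rightarrow> (nat \<Rightarrow> real) \<Rightarrow> (nat \<Rightarrow> real) \<Rightarrow> nat \<Rightarrow> real" where
  "est md P \<sigma> Pt \<sigma>t L \<theta> v z zt 0 = (sqrt P * \<theta> + z 1) / sqrt P"
| "est md P \<sigma> Pt \<sigma>t L \<theta> v z zt (Suc m) =
     (let n = Suc m;
          th = est md P \<sigma> Pt \<sigma>t L \<theta> v z zt m;
          Xt = md (gam P \<sigma> Pt \<sigma>t L n * th + v n);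
          Yt = Xt + zt n;
          et = md (Yt - gam P \<sigma> Pt \<sigma>t L n * \<theta> - v n);
          X = alpha P Pt L * et;
          Y = X + z (Suc n)
      in th - betaN P \<sigma> Pt \<sigma>t L n * Y)"

definition ThetaHat :: "(real \<Rightarrow> real) \<Rightarrow> real \<Rightarrow> real \<Rightarrow> real \<Rightarrow> real \<Rightarrow> real \<Rightarrow> real
    \<Rightarrow> (nat \<Rightarrow> real) \<Rightarrow> (nat \<Rightarrow> real) \<Rightarrow> (nat \<Rightarrow> real) \<Rightarrow> nat \<Rightarrow> real" where
  "ThetaHat md P \<sigma> Pt \<sigma>t L \<theta> v z zt n = est md P \<sigma> Pt \<sigma>t L \<theta> v z zt (n - 1)"

text \<open>Probability space: (message index, dithers V_n (n=1..N-1),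
  forward noises Z_n (n=1..N), feedback noises Zt_n (n=1..N-1)).
  Message uniform on {0..M-1}; everything independent.\<close>
definition scheme_space :: "nat \<Rightarrow> nat \<Rightarrow> real \<Rightarrow> real \<Rightarrow> real
    \<Rightarrow> (nat \<times> (nat \<Rightarrow> real) \<times> (nat \<Rightarrow> real) \<times> (nat \<Rightarrow> real)) measure" where
  "scheme_space M N Pt \<sigma> \<sigma>t =
     uniform_count_measure {..<M}
     \<Otimes>\<^sub>M (PiM {1..<N} (\<lambda>_. uniform_measure lborel {- dmod Pt / 2..<dmod Pt / 2})
     \<Otimes>\<^sub>M (PiM {1..N} (\<lambda>_. density lborel (normal_density 0 \<sigma>))
     \<Otimes>\<^sub>M PiM {1..<N} (\<lambda>_. density lborel (normal_density 0 \<sigma>t))))"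

definition alias_event :: "nat \<Rightarrow> nat \<Rightarrow> real \<Rightarrow> real \<Rightarrow> real \<Rightarrow> real \<Rightarrow> real \<Rightarrow> nat
    \<Rightarrow> (nat \<times> (nat \<Rightarrow> real) \<times> (nat \<Rightarrow> real) \<times> (nat \<Rightarrow> real)) set" where
  "alias_event M N P \<sigma> Pt \<sigma>t L n =
     {\<omega> \<in> space (scheme_space M N Pt \<sigma> \<sigma>t).
        case \<omega> of (k, v, z, zt) \<Rightarrow>
          gam P \<sigma> Pt \<sigma>t L n * (ThetaHat id P \<sigma> Pt \<sigma>t L (pam M k) v z zt n - pam M k) + zt n
            \<notin> {- dmod Pt / 2..<dmod Pt / 2}}"

text \<open>Decoding error event of the actual (modulo) scheme after N rounds:
  the transmitted PAM point is not the unique nearest point to hat Theta_N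
  (ties counted as errors).\<close>
definition error_event :: "nat \<Rightarrow> nat \<Rightarrow> real \<Rightarrow> real \<Rightarrow> real \<Rightarrow> real \<Rightarrow> real
    \<Rightarrow> (nat \<times> (nat \<Rightarrow> real) \<times> (nat \<Rightarrow> real) \<times> (nat \<Rightarrow> real)) set" where
  "error_event M N P \<sigma> Pt \<sigma>t L =
     {\<omega> \<in> space (scheme_space M N Pt \<sigma> \<sigma>t).
        case \<omega> of (k, v, z, zt) \<Rightarrow>
          (let th = ThetaHat (modd (dmod Pt)) P \<sigma> Pt \<sigma>t L (pam M k) v z zt N
           in \<not> (\<forall>j<M. j \<noteq> k \<longrightarrow> \<bar>th - pam M k\<bar> < \<bar>th - pam M j\<bar>))}"

end

theory Submission
  imports Defs
begin

text \<open>In the coupled system, where all modulo operations are removed, every quantity is a linear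
  function of the Gaussian noises. Hence the estimation error after round \<open>n\<close> is centred Gaussian
  with variance \<open>\<sigma>\<^sub>n\<^sup>2\<close>, which the choice of \<open>\<alpha>, \<beta>\<^sub>n, \<gamma>\<^sub>n\<close> divides by the factor \<open>1 + snr (1 - L/snr\<^sup>~)/(1 + L/\<Delta>)\<close>
  per round, and the argument \<open>\<gamma>\<^sub>n \<epsilon>'\<^sub>n + Z\<^sup>~\<^sub>n\<close> of the \<open>n\<close>-th modulo operation is centred Gaussian with
  variance \<open>P\<^sup>~/L\<close>; as \<open>d/2 = \<surd>(3P\<^sup>~)\<close>, each aliasing event has probability \<open>2Q(\<surd>(3L))\<close>.
  If no aliasing occurs, the two modulo operations of every round cancel, so the modulo scheme
  produces the same estimate as the coupled system. A decoding error then forces the final Gaussian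
  error to be at least half the PAM spacing \<open>\<eta>\<close>, an event of probability \<open>2Q(\<eta>/\<sigma>\<^sub>N)\<close>, and the
  union bound gives the estimate of the error probability.\<close>

section \<open>Centred Gaussian random variables\<close>

text \<open>The variance \<open>s = 0\<close> admits the constant zero variable, so that linear combinations of
  independent Gaussians with arbitrary (possibly vanishing) coefficients stay in the class.\<close>
definition centered_normal :: "'a measure \<Rightarrow> ('a \<Rightarrow> real) \<Rightarrow> real \<Rightarrow> bool" where
  "centered_normal M X s \<longleftrightarrow> (s > 0 \<and> distributed M lborel X (normal_density 0 s))
     \<or> (s = 0 \<and> X \<in> borel_measurable M \<and> (\<forall>x\<in>space M. X x = 0))"

lemma centered_normal_measurable: "centered_normal M X s \<Longrightarrow> X \<in> borel_measurable M"
  unfolding centered_normal_def using distributed_measurable by (metis measurable_lborel1)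

lemma centered_normal_nonneg: "centered_normal M X s \<Longrightarrow> s \<ge> 0"
  by (auto simp: centered_normal_def)

lemma distributed_cong_fun:
  assumes "distributed M N X f" "\<And>x. x \<in> space M \<Longrightarrow> X x = Y x"
  shows "distributed M N Y f"
proof -
  have "distr M N X = distr M N Y" by (rule distr_cong) (auto simp: assms)
  moreover have "Y \<in> measurable M N"
    using distributed_measurable[OF assms(1)] assms(2) measurable_cong by blast
  ultimately show ?thesis using assms(1) by (auto simp: distributed_def)
qed

lemma centered_normal_cong:
  assumes "centered_normal M X s" "\<And>x. x \<in> space M \<Longrightarrow> X x = Y x"
  shows "centered_normal M Y s"
  using assms distributed_cong_fun[of M lborel X _ Y] measurable_cong[of M X Y]
  unfolding centered_normal_def by metis

lemma (in prob_space) centered_normal_scale: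
  assumes "centered_normal M X s"
  shows "centered_normal M (\<lambda>x. c * X x) (\<bar>c\<bar> * s)"
proof (cases "c = 0 \<or> s = 0")
  case True
  then show ?thesis using assms centered_normal_measurable[OF assms] by (auto simp: centered_normal_def)
next
  case False
  then have s: "s > 0" "distributed M lborel X (normal_density 0 s)" and "c \<noteq> 0"
    using assms by (auto simp: centered_normal_def)
  have "distributed M lborel (\<lambda>x. 0 + c * X x) (normal_density (0 + c * 0) (\<bar>c\<bar> * s))"
    by (rule normal_density_affine[OF s(2) s(1) \<open>c \<noteq> 0\<close>])
  then show ?thesis using s \<open>c \<noteq> 0\<close> by (simp add: centered_normal_def)
qed

lemma (in prob_space) centered_normal_add:
  assumes ind: "indep_var borel X borel Y"
    and X: "centered_normal M X s" and Y: "centered_normal M Y t"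
  shows "centered_normal M (\<lambda>x. X x + Y x) (sqrt (s\<^sup>2 + t\<^sup>2))"
proof -
  consider "s = 0" | "t = 0" | "s > 0" "t > 0"
    using centered_normal_nonneg[OF X] centered_normal_nonneg[OF Y] by linarith
  then show ?thesis
  proof cases
    case 1
    then have "\<And>x. x \<in> space M \<Longrightarrow> Y x = X x + Y x" using X by (auto simp: centered_normal_def)
    with Y show ?thesis using 1 centered_normal_nonneg[OF Y] by (auto intro: centered_normal_cong)
  next
    case 2
    then have "\<And>x. x \<in> space M \<Longrightarrow> X x = X x + Y x" using Y by (auto simp: centered_normal_def)
    with X show ?thesis using 2 centered_normal_nonneg[OF X] by (auto intro: centered_normal_cong)
  next
    case 3
    then have "distributed M lborel (\<lambda>x. X x + Y x) (normal_density (0 + 0) (sqrt (s\<^sup>2 + t\<^sup>2)))"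
      using X Y by (intro add_indep_normal[OF ind]) (auto simp: centered_normal_def)
    then show ?thesis using 3 by (simp add: centered_normal_def add_pos_pos)
  qed
qed

lemma (in prob_space) centered_normal_sum:
  assumes "finite I" "indep_vars (\<lambda>_. borel) X I" "\<And>i. i \<in> I \<Longrightarrow> centered_normal M (X i) (s i)"
  shows "centered_normal M (\<lambda>x. \<Sum>i\<in>I. X i x) (sqrt (\<Sum>i\<in>I. (s i)\<^sup>2))"
  using assms
proof (induction I rule: finite_induct)
  case empty then show ?case by (simp add: centered_normal_def)
next
  case (insert i I)
  have "indep_var borel (X i) borel (\<lambda>\<omega>. \<Sum>i\<in>I. X i \<omega>)"
    by (rule indep_vars_sum[OF insert(1,2,4)])
  moreover have "centered_normal M (\<lambda>x. \<Sum>i\<in>I. X i x) (sqrt (\<Sum>i\<in>I. (s i)\<^sup>2))"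
    using insert by (auto intro: indep_vars_subset)
  ultimately have "centered_normal M (\<lambda>x. X i x + (\<Sum>i\<in>I. X i x))
      (sqrt ((s i)\<^sup>2 + (sqrt (\<Sum>i\<in>I. (s i)\<^sup>2))\<^sup>2))"
    by (intro centered_normal_add) (simp_all add: insert)
  then show ?case using insert by (simp add: sum_nonneg)
qed

lemma centered_normal_distr:
  assumes f: "f \<in> measurable M N" and "distr M N f = N" and X: "centered_normal N X s"
  shows "centered_normal M (\<lambda>\<omega>. X (f \<omega>)) s"
proof -
  have mX: "X \<in> borel_measurable N" by (rule centered_normal_measurable[OF X])
  have "distr M lborel (\<lambda>\<omega>. X (f \<omega>)) = distr (distr M N f) lborel X"
    using distr_distr[of X N lborel f M] f mX by (simp add: comp_def)
  then have "distr M lborel (\<lambda>\<omega>. X (f \<omega>)) = distr N lborel X" using assms(2) by simp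
  moreover have "(\<lambda>\<omega>. X (f \<omega>)) \<in> borel_measurable M" using f mX by measurable
  moreover have "\<omega> \<in> space M \<Longrightarrow> f \<omega> \<in> space N" for \<omega> using f by (rule measurable_space)
  ultimately show ?thesis using X by (auto simp: centered_normal_def distributed_def)
qed

lemma (in prob_space) distr_pair_snd: "distr (M \<Otimes>\<^sub>M N) N snd = N" if "prob_space N"
proof -
  interpret N: prob_space N by fact
  interpret pair_sigma_finite M N ..
  show ?thesis
  proof (intro measure_eqI)
    fix A assume A: "A \<in> sets (distr (M \<Otimes>\<^sub>M N) N snd)"
    then have "emeasure (distr (M \<Otimes>\<^sub>M N) N snd) A = emeasure (M \<Otimes>\<^sub>M N) (space M \<times> A)"
      by (auto simp: emeasure_distr space_pair_measure dest: sets.sets_into_space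
               intro!: arg_cong2[where f=emeasure])
    with A show "emeasure (distr (M \<Otimes>\<^sub>M N) N snd) A = emeasure N A"
      by (simp add: N.emeasure_pair_measure_Times emeasure_space_1)
  qed simp
qed

lemma indep_var_fst_snd:
  fixes f :: "'a \<Rightarrow> real" and g :: "'b \<Rightarrow> real"
  assumes "prob_space M1" "prob_space M2" "f \<in> borel_measurable M1" "g \<in> borel_measurable M2"
  shows "prob_space.indep_var (M1 \<Otimes>\<^sub>M M2) borel (\<lambda>\<omega>. f (fst \<omega>)) borel (\<lambda>\<omega>. g (snd \<omega>))"
proof -
  interpret M1: prob_space M1 by fact
  interpret M2: prob_space M2 by fact
  interpret pair_prob_space M1 M2 ..
  have "distr (M1 \<Otimes>\<^sub>M M2) borel (\<lambda>\<omega>. f (fst \<omega>)) = distr (distr (M1 \<Otimes>\<^sub>M M2) M1 fst) borel f"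
    using distr_distr[of f M1 borel fst "M1 \<Otimes>\<^sub>M M2"] assms by (simp add: comp_def)
  then have d1: "distr (M1 \<Otimes>\<^sub>M M2) borel (\<lambda>\<omega>. f (fst \<omega>)) = distr M1 borel f"
    by (simp add: M2.distr_pair_fst)
  have "distr (M1 \<Otimes>\<^sub>M M2) borel (\<lambda>\<omega>. g (snd \<omega>)) = distr (distr (M1 \<Otimes>\<^sub>M M2) M2 snd) borel g"
    using distr_distr[of g M2 borel snd "M1 \<Otimes>\<^sub>M M2"] assms by (simp add: comp_def)
  then have d2: "distr (M1 \<Otimes>\<^sub>M M2) borel (\<lambda>\<omega>. g (snd \<omega>)) = distr M2 borel g"
    by (simp add: M1.distr_pair_snd assms(2))
  have "sigma_finite_measure (distr M2 borel g)"
    using M2.prob_space_distr[OF assms(4)] prob_space_imp_sigma_finite by blast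
  then have "distr M1 borel f \<Otimes>\<^sub>M distr M2 borel g
      = distr (M1 \<Otimes>\<^sub>M M2) (borel \<Otimes>\<^sub>M borel) (\<lambda>(x, y). (f x, g y))"
    by (rule pair_measure_distr[OF assms(3,4)])
  also have "(\<lambda>(x, y). (f x, g y)) = (\<lambda>\<omega>. (f (fst \<omega>), g (snd \<omega>)))" by auto
  finally show ?thesis
    using assms(3,4) by (subst P.indep_var_distribution_eq) (simp add: d1 d2)
qed

lemma centered_normal_pair_add:
  assumes "prob_space M1" "prob_space M2" "centered_normal M1 f s" "centered_normal M2 g t"
  shows "centered_normal (M1 \<Otimes>\<^sub>M M2) (\<lambda>\<omega>. f (fst \<omega>) + g (snd \<omega>)) (sqrt (s\<^sup>2 + t\<^sup>2))"
proof -
  interpret M1: prob_space M1 by fact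
  interpret M2: prob_space M2 by fact
  interpret pair_prob_space M1 M2 ..
  show ?thesis
  proof (rule P.centered_normal_add)
    show "P.indep_var borel (\<lambda>\<omega>. f (fst \<omega>)) borel (\<lambda>\<omega>. g (snd \<omega>))"
      using assms by (intro indep_var_fst_snd centered_normal_measurable)
    show "centered_normal (M1 \<Otimes>\<^sub>M M2) (\<lambda>\<omega>. f (fst \<omega>)) s"
      by (rule centered_normal_distr[OF measurable_fst M2.distr_pair_fst assms(3)])
    show "centered_normal (M1 \<Otimes>\<^sub>M M2) (\<lambda>\<omega>. g (snd \<omega>)) t"
      by (rule centered_normal_distr[OF measurable_snd M1.distr_pair_snd[OF assms(2)] assms(4)])
  qed
qed

lemma
  fixes N :: "real measure"
  assumes fin: "finite I" and N: "prob_space N" "sets N = sets borel"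
  shows indep_vars_PiM_coordinates:
      "prob_space.indep_vars (PiM I (\<lambda>_. N)) (\<lambda>_. borel) (\<lambda>i x. x i) I"
    and distr_PiM_coordinate: "i \<in> I \<Longrightarrow> distr (PiM I (\<lambda>_. N)) borel (\<lambda>x. x i) = N"
proof -
  interpret N: prob_space N by fact
  interpret product_prob_space "\<lambda>_. N" I by unfold_locales
  show comp: "distr (PiM I (\<lambda>_. N)) borel (\<lambda>x. x i) = N" if "i \<in> I" for i
  proof -
    have "distr (PiM I (\<lambda>_. N)) borel (\<lambda>x. x i) = distr (PiM I (\<lambda>_. N)) N (\<lambda>x. x i)"
      using N(2) by (intro distr_cong) auto
    then show ?thesis using distr_PiM_component[of I "\<lambda>_. N" i] that N(1) by simp
  qed
  show "P.indep_vars (\<lambda>_. borel) (\<lambda>i x. x i) I"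
  proof (cases "I = {}")
    case True then show ?thesis unfolding P.indep_vars_def2 P.indep_sets_def by simp
  next
    case False
    have "distr (Pi\<^sub>M I (\<lambda>_. N)) (Pi\<^sub>M I (\<lambda>i. borel)) (\<lambda>x. \<lambda>i\<in>I. x i)
        = distr (Pi\<^sub>M I (\<lambda>_. N)) (Pi\<^sub>M I (\<lambda>_. N)) (\<lambda>x. x)"
      using N(2) by (intro distr_cong)
        (auto simp: space_PiM restrict_def PiE_def extensional_def intro!: sets_PiM_cong)
    also have "\<dots> = Pi\<^sub>M I (\<lambda>i. distr (Pi\<^sub>M I (\<lambda>_. N)) borel (\<lambda>x. x i))"
      by (simp add: comp cong: PiM_cong)
    finally show ?thesis
      using N(2) by (subst P.indep_vars_iff_distr_eq_PiM'[OF False]) auto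
  qed
qed

lemma centered_normal_PiM_lincomb:
  fixes c :: "'i \<Rightarrow> real"
  assumes "finite I" and s: "s > 0"
  shows "centered_normal (PiM I (\<lambda>_. density lborel (normal_density 0 s)))
           (\<lambda>x. \<Sum>i\<in>I. c i * x i) (sqrt (\<Sum>i\<in>I. (c i)\<^sup>2 * s\<^sup>2))"
proof -
  let ?N = "density lborel (normal_density 0 s)"
  have N: "prob_space ?N" "sets ?N = sets borel" using s by (auto intro: prob_space_normal_density)
  interpret N: prob_space ?N by (rule N(1))
  interpret product_prob_space "\<lambda>_. ?N" I by unfold_locales
  have "P.indep_vars (\<lambda>_. borel) (\<lambda>i x. c i * x i) I"
    using P.indep_vars_compose2[OF indep_vars_PiM_coordinates[OF assms(1) N],
        of "\<lambda>i y. c i * y" "\<lambda>_. borel"] by auto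
  moreover have "centered_normal (PiM I (\<lambda>_. ?N)) (\<lambda>x. c i * x i) (\<bar>c i\<bar> * s)" if "i \<in> I" for i
  proof (rule P.centered_normal_scale)
    have "distr (PiM I (\<lambda>_. ?N)) lborel (\<lambda>x. x i) = ?N"
      using distr_PiM_coordinate[OF assms(1) N that] by (simp cong: distr_cong)
    then show "centered_normal (PiM I (\<lambda>_. ?N)) (\<lambda>x. x i) s"
      using s that by (simp add: centered_normal_def distributed_def)
  qed
  ultimately have "centered_normal (PiM I (\<lambda>_. ?N)) (\<lambda>x. \<Sum>i\<in>I. c i * x i) (sqrt (\<Sum>i\<in>I. (\<bar>c i\<bar> * s)\<^sup>2))"
    by (intro P.centered_normal_sum assms(1))
  then show ?thesis by (simp add: power_mult_distrib)
qed

section \<open>Gaussian tail probabilities\<close>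

lemma Qfun_nonneg: "Qfun c \<ge> 0"
  unfolding Qfun_def set_lebesgue_integral_def by (intro integral_nonneg_AE) (auto simp: indicator_def)

lemma nn_integral_std_normal_greater:
  "(\<integral>\<^sup>+x. ennreal (std_normal_density x) * indicator {c<..} x \<partial>lborel) = ennreal (Qfun c)"
proof -
  have int: "integrable lborel (\<lambda>x. indicator {c<..} x * std_normal_density x)"
    using integrable_mult_indicator[of "{c<..}" lborel std_normal_density] by simp
  have "(\<integral>\<^sup>+x. ennreal (std_normal_density x) * indicator {c<..} x \<partial>lborel)
       = (\<integral>\<^sup>+x. ennreal (indicator {c<..} x * std_normal_density x) \<partial>lborel)"
    by (intro nn_integral_cong) (auto simp: indicator_def)
  also have "\<dots> = ennreal (\<integral>x. indicator {c<..} x * std_normal_density x \<partial>lborel)"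
    by (rule nn_integral_eq_integral[OF int]) auto
  finally show ?thesis unfolding Qfun_def set_lebesgue_integral_def by simp
qed

lemma (in prob_space) prob_std_normal_greater:
  assumes "distributed M lborel Y std_normal_density"
  shows "prob {x\<in>space M. c < Y x} = Qfun c"
proof -
  have "emeasure M (Y -` {c<..} \<inter> space M)
      = (\<integral>\<^sup>+x. ennreal (std_normal_density x) * indicator {c<..} x \<partial>lborel)"
    by (rule distributed_emeasure[OF assms]) auto
  then have "emeasure M {x\<in>space M. c < Y x} = ennreal (Qfun c)"
    by (simp add: nn_integral_std_normal_greater vimage_def Int_def conj_commute)
  then show ?thesis using Qfun_nonneg by (simp add: emeasure_eq_measure)
qed

lemma (in prob_space) prob_std_normal_greater_eq:
  assumes "distributed M lborel Y std_normal_density"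
  shows "prob {x\<in>space M. c \<le> Y x} = Qfun c"
proof -
  have "emeasure M (Y -` {c..} \<inter> space M)
      = (\<integral>\<^sup>+x. ennreal (std_normal_density x) * indicator {c..} x \<partial>lborel)"
    by (rule distributed_emeasure[OF assms]) auto
  also have "\<dots> = (\<integral>\<^sup>+x. ennreal (std_normal_density x) * indicator {c<..} x \<partial>lborel)"
    by (rule nn_integral_cong_AE)
      (use AE_lborel_singleton[of c] in \<open>auto simp: indicator_def elim!: eventually_mono\<close>)
  finally have "emeasure M {x\<in>space M. c \<le> Y x} = ennreal (Qfun c)"
    by (simp add: nn_integral_std_normal_greater vimage_def Int_def conj_commute)
  then show ?thesis using Qfun_nonneg by (simp add: emeasure_eq_measure)
qed

lemma (in prob_space)
  assumes X: "centered_normal M X s" and s: "s > 0" and a: "a > 0"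
  shows prob_centered_normal_outside: "prob {x\<in>space M. X x \<notin> {-a..<a}} = 2 * Qfun (a / s)"
    and prob_centered_normal_abs_ge: "prob {x\<in>space M. a \<le> \<bar>X x\<bar>} = 2 * Qfun (a / s)"
proof -
  have "distributed M lborel X (normal_density 0 s)" using X s by (auto simp: centered_normal_def)
  then have Y: "distributed M lborel (\<lambda>x. X x / s) std_normal_density"
    using normal_standard_normal_convert[OF s] by simp
  have "distributed M lborel (\<lambda>x. 0 + (-1) * (X x / s)) (normal_density (0 + (-1) * 0) (\<bar>-1\<bar> * 1))"
    by (rule normal_density_affine[OF Y]) auto
  then have W: "distributed M lborel (\<lambda>x. - X x / s) std_normal_density" by simp
  have mX: "X \<in> borel_measurable M" by (rule centered_normal_measurable[OF X])
  have upper: "prob {x\<in>space M. a \<le> X x} = Qfun (a/s)"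
    using prob_std_normal_greater_eq[OF Y, of "a/s"] s by (simp add: divide_le_cancel)
  have lower_strict: "prob {x\<in>space M. X x < - a} = Qfun (a/s)"
    using prob_std_normal_greater[OF W, of "a/s"] s by (simp add: field_simps less_minus_iff)
  have lower: "prob {x\<in>space M. X x \<le> - a} = Qfun (a/s)"
    using prob_std_normal_greater_eq[OF W, of "a/s"] s by (simp add: field_simps le_minus_iff)
  have "{x\<in>space M. X x \<notin> {-a..<a}} = {x\<in>space M. X x < - a} \<union> {x\<in>space M. a \<le> X x}"
    by auto
  moreover have "prob ({x\<in>space M. X x < - a} \<union> {x\<in>space M. a \<le> X x})
     = prob {x\<in>space M. X x < - a} + prob {x\<in>space M. a \<le> X x}"
    by (rule finite_measure_Union) (use a mX in auto)
  ultimately show "prob {x\<in>space M. X x \<notin> {-a..<a}} = 2 * Qfun (a / s)"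
    using upper lower_strict by simp
  have "{x\<in>space M. a \<le> \<bar>X x\<bar>} = {x\<in>space M. X x \<le> - a} \<union> {x\<in>space M. a \<le> X x}"
    by auto
  moreover have "prob ({x\<in>space M. X x \<le> - a} \<union> {x\<in>space M. a \<le> X x})
     = prob {x\<in>space M. X x \<le> - a} + prob {x\<in>space M. a \<le> X x}"
    by (rule finite_measure_Union) (use a mX in auto)
  ultimately show "prob {x\<in>space M. a \<le> \<bar>X x\<bar>} = 2 * Qfun (a / s)"
    using upper lower by simp
qed

section \<open>Parameter identities\<close>

locale scheme_parameters =
  fixes P \<sigma> Pt \<sigma>t L :: real
  assumes P_pos: "P > 0" and \<sigma>_pos: "\<sigma> > 0" and Pt_pos: "Pt > 0" and \<sigma>t_pos: "\<sigma>t > 0"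
    and L_pos: "L > 0" and L_less_snr: "L < snr Pt \<sigma>t"
begin

abbreviation "\<alpha> \<equiv> alpha P Pt L"
abbreviation "\<beta> \<equiv> betaN P \<sigma> Pt \<sigma>t L"
abbreviation "\<gamma> \<equiv> gam P \<sigma> Pt \<sigma>t L"
abbreviation "sdev \<equiv> sig P \<sigma> Pt \<sigma>t L"
abbreviation "G \<equiv> gfac P \<sigma> Pt \<sigma>t L"

text \<open>In terms of \<open>r = snr\<close> and \<open>u = L / snr\<^sup>~\<close> all parameter identities become rational.\<close>
definition "r = snr P \<sigma>"
definition "u = L / snr Pt \<sigma>t"

lemma r_pos: "r > 0"
  using P_pos \<sigma>_pos by (simp add: r_def snr_def)

lemma L_\<sigma>t_less: "L * \<sigma>t\<^sup>2 < Pt"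
  using L_less_snr \<sigma>t_pos by (simp add: snr_def less_divide_eq)

lemma u_pos: "u > 0" and u_less_1: "u < 1"
  using L_\<sigma>t_less L_pos Pt_pos \<sigma>t_pos by (auto simp: u_def snr_def field_simps)

lemma gfac_eq: "G = (1 + r) / (1 + u * r)"
proof -
  have "L / Delta P \<sigma> Pt \<sigma>t = u * r"
    using P_pos \<sigma>_pos Pt_pos \<sigma>t_pos by (simp add: Delta_def u_def r_def snr_def field_simps)
  moreover have "1 + u * r > 0" using r_pos u_pos by (simp add: add_pos_pos)
  ultimately show ?thesis unfolding gfac_def r_def[symmetric] u_def[symmetric]
    by (simp add: field_simps)
qed

lemma gfac_gt_1: "G > 1"
  using r_pos u_pos u_less_1 by (simp add: gfac_eq add_pos_pos mult_less_cancel_right1)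

lemma sdev_pos: "sdev n > 0"
  unfolding sig_def using r_pos gfac_gt_1 by (simp add: r_def[symmetric])

lemma sdev_sq: "(sdev n)\<^sup>2 = inverse r * G powr (1 - real n)"
  unfolding sig_def using r_pos gfac_gt_1 by (simp add: r_def[symmetric])

lemma sdev_sq_Suc: "(sdev (Suc n))\<^sup>2 = (sdev n)\<^sup>2 / G"
proof -
  have "G powr (1 - real (Suc n)) = G powr ((1 - real n) - 1)" by (simp add: algebra_simps)
  also have "\<dots> = G powr (1 - real n) / G"
    using gfac_gt_1 by (simp add: powr_diff powr_minus_divide)
  finally show ?thesis by (simp add: sdev_sq)
qed

lemma sdev_1_sq: "(sdev 1)\<^sup>2 = \<sigma>\<^sup>2 / P"
  using P_pos \<sigma>_pos gfac_gt_1 by (simp add: sdev_sq r_def snr_def)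

lemma gam_sdev_sq: "(\<gamma> n)\<^sup>2 * (sdev n)\<^sup>2 = Pt / L - \<sigma>t\<^sup>2"
proof -
  have "Pt / L - \<sigma>t\<^sup>2 \<ge> 0" using L_\<sigma>t_less L_pos by (simp add: field_simps)
  then show ?thesis using sdev_pos[of n] unfolding gam_def by (simp add: power_divide)
qed

lemma beta_alpha_gam: "\<beta> n * \<alpha> * \<gamma> n = r * (1 - u) / (1 + r)"
proof -
  define sg where "sg = sdev n"
  have sg: "sg > 0" using sdev_pos sg_def by simp
  have "L * P / Pt * (Pt / L - \<sigma>t\<^sup>2) = P * (1 - u)"
    unfolding u_def snr_def using L_pos Pt_pos \<sigma>t_pos by (simp add: field_simps)
  then have e2: "sqrt (L * P / Pt) * sqrt (Pt / L - \<sigma>t\<^sup>2) = sqrt (P * (1 - u))"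
    by (simp only: real_sqrt_mult[symmetric])
  have "r * (1 - u) * (P * (1 - u)) = ((1 - u) * (P / \<sigma>))\<^sup>2"
    using \<sigma>_pos by (simp add: r_def snr_def power2_eq_square field_simps)
  moreover have "(1 - u) * (P / \<sigma>) \<ge> 0" using u_less_1 P_pos \<sigma>_pos by simp
  ultimately have e3: "sqrt (r * (1 - u)) * sqrt (P * (1 - u)) = (1 - u) * (P / \<sigma>)"
    by (simp only: real_sqrt_mult[symmetric] real_sqrt_abs abs_of_nonneg)
  have "\<beta> n * \<alpha> * \<gamma> n
      = sg / \<sigma> * (sqrt (r * (1 - u)) * (sqrt (L * P / Pt) * sqrt (Pt / L - \<sigma>t\<^sup>2))) / (1 + r) / sg"
    unfolding betaN_def alpha_def gam_def sg_def[symmetric] r_def[symmetric] u_def[symmetric]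
    by (simp add: divide_inverse ac_simps)
  also have "\<dots> = (1 - u) * (P / \<sigma>\<^sup>2) / (1 + r)"
    unfolding e2 e3 using sg \<sigma>_pos by (simp add: power2_eq_square)
  finally show ?thesis by (simp add: r_def snr_def)
qed

lemma beta_sq: "(\<beta> n)\<^sup>2 = (sdev n)\<^sup>2 / \<sigma>\<^sup>2 * (r * (1 - u) / (1 + r)\<^sup>2)"
proof -
  have "r * (1 - u) \<ge> 0" using r_pos u_less_1 by simp
  then show ?thesis
    unfolding betaN_def r_def[symmetric] u_def[symmetric] by (simp add: power_mult_distrib power_divide)
qed

definition "contraction = (1 + u * r) / (1 + r)"

lemma one_minus_beta_alpha_gam: "1 - \<beta> n * \<alpha> * \<gamma> n = contraction"
  unfolding beta_alpha_gam contraction_def using r_pos by (simp add: field_simps)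

lemma error_variance_step:
  "contraction\<^sup>2 * (sdev n)\<^sup>2 + (\<beta> n)\<^sup>2 * \<sigma>\<^sup>2 + (\<beta> n * \<alpha>)\<^sup>2 * \<sigma>t\<^sup>2 = (sdev (Suc n))\<^sup>2"
proof -
  define S where "S = (sdev n)\<^sup>2"
  define A where "A = r * (1 - u) / (1 + r)\<^sup>2"
  have fwd: "(\<beta> n)\<^sup>2 * \<sigma>\<^sup>2 = S * A"
    using \<sigma>_pos by (simp add: beta_sq S_def A_def)
  have "(\<beta> n * \<alpha>)\<^sup>2 * \<sigma>t\<^sup>2 = S * A * (L * P / Pt * \<sigma>t\<^sup>2 / \<sigma>\<^sup>2)"
    unfolding power_mult_distrib beta_sq S_def A_def using L_pos P_pos Pt_pos
    by (simp add: alpha_def ac_simps)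
  also have "L * P / Pt * \<sigma>t\<^sup>2 / \<sigma>\<^sup>2 = u * r"
    using \<sigma>_pos \<sigma>t_pos Pt_pos by (simp add: u_def r_def snr_def field_simps)
  finally have "contraction\<^sup>2 * S + (\<beta> n)\<^sup>2 * \<sigma>\<^sup>2 + (\<beta> n * \<alpha>)\<^sup>2 * \<sigma>t\<^sup>2
      = S * (contraction\<^sup>2 + A * (1 + u * r))"
    unfolding fwd by (simp add: algebra_simps)
  also have "contraction\<^sup>2 + A * (1 + u * r) = (1 + u * r) / (1 + r)"
  proof -
    have "contraction\<^sup>2 + A * (1 + u * r) = ((1 + u * r)\<^sup>2 + r * (1 - u) * (1 + u * r)) / (1 + r)\<^sup>2"
      unfolding contraction_def A_def power_divide by (simp add: add_divide_distrib)
    also have "(1 + u * r)\<^sup>2 + r * (1 - u) * (1 + u * r) = (1 + u * r) * (1 + r)"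
      by (simp add: algebra_simps power2_eq_square)
    finally show ?thesis using r_pos by (simp add: power2_eq_square)
  qed
  finally show ?thesis using gfac_gt_1 by (simp add: S_def sdev_sq_Suc gfac_eq)
qed

end

section \<open>The coupled system as a linear function of the noise\<close>

definition noise_comb :: "nat \<Rightarrow> (nat \<Rightarrow> real) \<Rightarrow> (nat \<Rightarrow> real) \<Rightarrow> (nat \<Rightarrow> real) \<Rightarrow> (nat \<Rightarrow> real) \<Rightarrow> real"
  where "noise_comb N c e z zt = (\<Sum>i\<in>{1..N}. c i * z i) + (\<Sum>j\<in>{1..<N}. e j * zt j)"

lemma sum_scale_add_delta:
  fixes c z :: "nat \<Rightarrow> real"
  assumes "finite I" "k \<in> I"
  shows "(\<Sum>i\<in>I. (a * c i + (if i = k then b else 0)) * z i) = a * (\<Sum>i\<in>I. c i * z i) + b * z k"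
proof -
  have "\<And>i. (a * c i + (if i = k then b else 0)) * z i = a * (c i * z i) + (if i = k then b * z i else 0)"
    by (auto simp: algebra_simps)
  then show ?thesis using assms by (simp add: sum.distrib sum_distrib_left)
qed

lemma sum_sq_scale_add_delta:
  fixes c :: "nat \<Rightarrow> real"
  assumes "finite I" "k \<in> I" "c k = 0"
  shows "(\<Sum>i\<in>I. (a * c i + (if i = k then b else 0))\<^sup>2 * w) = a\<^sup>2 * (\<Sum>i\<in>I. (c i)\<^sup>2 * w) + b\<^sup>2 * w"
proof -
  have "(\<Sum>i\<in>I - {k}. (a * c i + (if i = k then b else 0))\<^sup>2 * w) = (\<Sum>i\<in>I - {k}. a\<^sup>2 * ((c i)\<^sup>2 * w))"
    by (rule sum.cong) (auto simp: power_mult_distrib)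
  moreover have "(\<Sum>i\<in>I. (c i)\<^sup>2 * w) = (\<Sum>i\<in>I - {k}. (c i)\<^sup>2 * w)"
    using assms by (simp add: sum.remove)
  ultimately show ?thesis using assms by (simp add: sum.remove sum_distrib_left)
qed

context scheme_parameters
begin

text \<open>\<open>fwd_coeff m i\<close> and \<open>fb_coeff m j\<close> are the coefficients of the forward noise \<open>Z\<^sub>i\<close> and
  the feedback noise \<open>Z\<^sup>~\<^sub>j\<close> in the estimation error of the coupled system after round
  \<open>m + 1\<close>, i.e.\ in \<open>est id \<dots> m - \<theta>\<close>.\<close>
primrec fwd_coeff :: "nat \<Rightarrow> nat \<Rightarrow> real" where
  "fwd_coeff 0 i = (if i = 1 then 1 / sqrt P else 0)"
| "fwd_coeff (Suc m) i = contraction * fwd_coeff m i + (if i = m + 2 then - \<beta> (Suc m) else 0)"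

primrec fb_coeff :: "nat \<Rightarrow> nat \<Rightarrow> real" where
  "fb_coeff 0 j = 0"
| "fb_coeff (Suc m) j = contraction * fb_coeff m j + (if j = Suc m then - \<beta> (Suc m) * \<alpha> else 0)"

lemma fwd_coeff_eq_0: "i > m + 1 \<Longrightarrow> fwd_coeff m i = 0"
  by (induction m arbitrary: i) auto

lemma fb_coeff_eq_0: "j > m \<Longrightarrow> fb_coeff m j = 0"
  by (induction m arbitrary: j) auto

lemma est_id_error:
  assumes "m < N"
  shows "est id P \<sigma> Pt \<sigma>t L \<theta> v z zt m - \<theta> = noise_comb N (fwd_coeff m) (fb_coeff m) z zt"
  using assms
proof (induction m)
  case 0
  have "(\<Sum>i\<in>{1..N}. fwd_coeff 0 i * z i) = (\<Sum>i\<in>{1..N}. if i = 1 then z i / sqrt P else 0)"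
    by (rule sum.cong) auto
  then show ?case using 0 P_pos by (simp add: noise_comb_def field_simps)
next
  case (Suc m)
  let ?e = "est id P \<sigma> Pt \<sigma>t L \<theta> v z zt m - \<theta>"
  have "est id P \<sigma> Pt \<sigma>t L \<theta> v z zt (Suc m) - \<theta>
      = (1 - \<beta> (Suc m) * \<alpha> * \<gamma> (Suc m)) * ?e - \<beta> (Suc m) * z (m + 2) - \<beta> (Suc m) * \<alpha> * zt (Suc m)"
    by (simp add: Let_def algebra_simps)
  also have "\<dots> = contraction * noise_comb N (fwd_coeff m) (fb_coeff m) z zt
      - \<beta> (Suc m) * z (m + 2) - \<beta> (Suc m) * \<alpha> * zt (Suc m)"
    by (simp only: one_minus_beta_alpha_gam Suc.IH[OF Suc_lessD[OF Suc.prems]])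
  also have "\<dots> = noise_comb N (fwd_coeff (Suc m)) (fb_coeff (Suc m)) z zt"
  proof -
    have "(\<Sum>i\<in>{1..N}. fwd_coeff (Suc m) i * z i)
        = contraction * (\<Sum>i\<in>{1..N}. fwd_coeff m i * z i) + (- \<beta> (Suc m)) * z (m + 2)"
      unfolding fwd_coeff.simps using Suc.prems by (intro sum_scale_add_delta) auto
    moreover have "(\<Sum>j\<in>{1..<N}. fb_coeff (Suc m) j * zt j)
        = contraction * (\<Sum>j\<in>{1..<N}. fb_coeff m j * zt j) + (- \<beta> (Suc m) * \<alpha>) * zt (Suc m)"
      unfolding fb_coeff.simps using Suc.prems by (intro sum_scale_add_delta) auto
    ultimately show ?thesis unfolding noise_comb_def by (simp add: algebra_simps)
  qed
  finally show ?case .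
qed

definition noise_var :: "nat \<Rightarrow> (nat \<Rightarrow> real) \<Rightarrow> (nat \<Rightarrow> real) \<Rightarrow> real" where
  "noise_var N c e = (\<Sum>i\<in>{1..N}. (c i)\<^sup>2 * \<sigma>\<^sup>2) + (\<Sum>j\<in>{1..<N}. (e j)\<^sup>2 * \<sigma>t\<^sup>2)"

lemma noise_var_coeff:
  assumes "m < N"
  shows "noise_var N (fwd_coeff m) (fb_coeff m) = (sdev (Suc m))\<^sup>2"
  using assms
proof (induction m)
  case 0
  have "(\<Sum>i\<in>{1..N}. (fwd_coeff 0 i)\<^sup>2 * \<sigma>\<^sup>2) = (\<Sum>i\<in>{1..N}. if i = 1 then \<sigma>\<^sup>2 / P else 0)"
    by (rule sum.cong) (use P_pos in \<open>auto simp: power_divide\<close>)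
  then show ?case using 0 sdev_1_sq by (simp add: noise_var_def)
next
  case (Suc m)
  have "(\<Sum>i\<in>{1..N}. (fwd_coeff (Suc m) i)\<^sup>2 * \<sigma>\<^sup>2)
      = contraction\<^sup>2 * (\<Sum>i\<in>{1..N}. (fwd_coeff m i)\<^sup>2 * \<sigma>\<^sup>2) + (- \<beta> (Suc m))\<^sup>2 * \<sigma>\<^sup>2"
    unfolding fwd_coeff.simps using Suc.prems by (intro sum_sq_scale_add_delta fwd_coeff_eq_0) auto
  moreover have "(\<Sum>j\<in>{1..<N}. (fb_coeff (Suc m) j)\<^sup>2 * \<sigma>t\<^sup>2)
      = contraction\<^sup>2 * (\<Sum>j\<in>{1..<N}. (fb_coeff m j)\<^sup>2 * \<sigma>t\<^sup>2) + (- \<beta> (Suc m) * \<alpha>)\<^sup>2 * \<sigma>t\<^sup>2"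
    unfolding fb_coeff.simps using Suc.prems by (intro sum_sq_scale_add_delta fb_coeff_eq_0) auto
  ultimately have "noise_var N (fwd_coeff (Suc m)) (fb_coeff (Suc m))
      = contraction\<^sup>2 * noise_var N (fwd_coeff m) (fb_coeff m)
        + (\<beta> (Suc m))\<^sup>2 * \<sigma>\<^sup>2 + (\<beta> (Suc m) * \<alpha>)\<^sup>2 * \<sigma>t\<^sup>2"
    unfolding noise_var_def by (simp add: algebra_simps)
  also have "\<dots> = (sdev (Suc (Suc m)))\<^sup>2"
    using Suc by (simp add: error_variance_step)
  finally show ?case .
qed

text \<open>Coefficients of the argument \<open>\<gamma>\<^sub>n \<epsilon>'\<^sub>n + Z\<^sup>~\<^sub>n\<close> of the \<open>n\<close>-th modulo-aliasing event.\<close>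
definition "alias_fwd_coeff n i = \<gamma> n * fwd_coeff (n - 1) i"
definition "alias_fb_coeff n j = \<gamma> n * fb_coeff (n - 1) j + (if j = n then 1 else 0)"

lemma alias_argument_eq:
  assumes "n \<in> {1..<N}"
  shows "\<gamma> n * (ThetaHat id P \<sigma> Pt \<sigma>t L \<theta> v z zt n - \<theta>) + zt n
     = noise_comb N (alias_fwd_coeff n) (alias_fb_coeff n) z zt"
proof -
  have "ThetaHat id P \<sigma> Pt \<sigma>t L \<theta> v z zt n - \<theta> = noise_comb N (fwd_coeff (n - 1)) (fb_coeff (n - 1)) z zt"
    unfolding ThetaHat_def using assms by (intro est_id_error) auto
  moreover have "(\<Sum>j\<in>{1..<N}. alias_fb_coeff n j * zt j)
      = \<gamma> n * (\<Sum>j\<in>{1..<N}. fb_coeff (n - 1) j * zt j) + 1 * zt n"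
    unfolding alias_fb_coeff_def using assms by (intro sum_scale_add_delta) auto
  ultimately show ?thesis
    unfolding noise_comb_def alias_fwd_coeff_def by (simp add: sum_distrib_left algebra_simps)
qed

lemma noise_var_alias:
  assumes "n \<in> {1..<N}"
  shows "noise_var N (alias_fwd_coeff n) (alias_fb_coeff n) = Pt / L"
proof -
  have n: "n - 1 < N" "Suc (n - 1) = n" using assms by auto
  have "(\<Sum>j\<in>{1..<N}. (alias_fb_coeff n j)\<^sup>2 * \<sigma>t\<^sup>2)
      = (\<gamma> n)\<^sup>2 * (\<Sum>j\<in>{1..<N}. (fb_coeff (n - 1) j)\<^sup>2 * \<sigma>t\<^sup>2) + 1\<^sup>2 * \<sigma>t\<^sup>2"
    unfolding alias_fb_coeff_def using assms by (intro sum_sq_scale_add_delta fb_coeff_eq_0) auto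
  then have "noise_var N (alias_fwd_coeff n) (alias_fb_coeff n)
      = (\<gamma> n)\<^sup>2 * noise_var N (fwd_coeff (n - 1)) (fb_coeff (n - 1)) + \<sigma>t\<^sup>2"
    unfolding noise_var_def alias_fwd_coeff_def
    by (simp add: power_mult_distrib sum_distrib_left algebra_simps)
  also have "\<dots> = Pt / L"
    using noise_var_coeff[OF n(1), unfolded n(2)] gam_sdev_sq[of n] by simp
  finally show ?thesis .
qed

end

section \<open>Modulo arithmetic and the absence of aliasing\<close>

lemma round_add_of_int: "round (x + real_of_int k) = round x + k"
  unfolding round_def by (metis add.commute add.left_commute floor_add_int)

lemma modd_modd_add: "d \<noteq> 0 \<Longrightarrow> modd d (modd d x + y) = modd d (x + y)"
proof -
  assume d: "d \<noteq> 0"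
  have "(modd d x + y) / d = (x + y) / d + real_of_int (- round (x / d))"
    using d unfolding modd_def by (simp add: field_simps)
  then have "round ((modd d x + y) / d) = round ((x + y) / d) + - round (x / d)"
    by (simp only: round_add_of_int)
  then show ?thesis unfolding modd_def[of d "modd d x + y"]
    by (simp only:) (simp add: modd_def algebra_simps)
qed

lemma modd_eq_self: "d > 0 \<Longrightarrow> w \<in> {- d / 2..<d / 2} \<Longrightarrow> modd d w = w"
proof -
  assume d: "d > 0" and w: "w \<in> {- d / 2..<d / 2}"
  have "0 \<le> w / d + 1/2" "w / d + 1/2 < 1" using d w by (auto simp: field_simps)
  then have "round (w / d) = 0" unfolding round_def by (simp add: floor_eq_iff)
  then show ?thesis unfolding modd_def by simp
qed

context scheme_parameters
begin

lemma est_modd_eq_est_id: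
  assumes no_alias: "\<forall>n\<in>{1..<N}. \<gamma> n * (ThetaHat id P \<sigma> Pt \<sigma>t L \<theta> v z zt n - \<theta>) + zt n
              \<in> {- dmod Pt / 2..<dmod Pt / 2}"
  shows "m < N \<Longrightarrow> est (modd (dmod Pt)) P \<sigma> Pt \<sigma>t L \<theta> v z zt m = est id P \<sigma> Pt \<sigma>t L \<theta> v z zt m"
proof (induction m)
  case 0 then show ?case by simp
next
  case (Suc m)
  define d where "d = dmod Pt"
  define th where "th = est id P \<sigma> Pt \<sigma>t L \<theta> v z zt m"
  define g where "g = \<gamma> (Suc m)"
  have d: "d > 0" using Pt_pos by (simp add: d_def dmod_def)
  have IH: "est (modd d) P \<sigma> Pt \<sigma>t L \<theta> v z zt m = th"
    using Suc.IH[OF Suc_lessD[OF Suc.prems]] by (simp only: th_def d_def)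
  have "g * (th - \<theta>) + zt (Suc m) \<in> {- d / 2..<d / 2}"
    using no_alias[rule_format, of "Suc m"] Suc.prems by (simp add: ThetaHat_def th_def g_def d_def)
  then have cancel: "modd d (modd d (g * th + v (Suc m)) + zt (Suc m) - g * \<theta> - v (Suc m))
      = g * (th - \<theta>) + zt (Suc m)"
    using d modd_modd_add[of d "g * th + v (Suc m)" "zt (Suc m) - g * \<theta> - v (Suc m)"]
    by (simp add: modd_eq_self algebra_simps add_diff_eq)
  have "est (modd d) P \<sigma> Pt \<sigma>t L \<theta> v z zt (Suc m)
      = th - \<beta> (Suc m) * (\<alpha> * (g * (th - \<theta>) + zt (Suc m)) + z (Suc (Suc m)))"
    unfolding est.simps Let_def IH g_def[symmetric] cancel ..
  also have "\<dots> = est id P \<sigma> Pt \<sigma>t L \<theta> v z zt (Suc m)"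
    unfolding est.simps Let_def id_apply th_def[symmetric] g_def[symmetric] by (simp add: algebra_simps)
  finally show ?case unfolding d_def .
qed

end

lemma pam_diff: "pam M k - pam M j = 2 * (real k - real j) * sqrt (3 / ((real M)\<^sup>2 - 1))"
  unfolding pam_def by (simp add: left_diff_distrib[symmetric])

text \<open>Consecutive PAM points are \<open>2\<eta>\<close> apart, so a received point that is not strictly closest to
  the transmitted one is at distance at least \<open>\<eta>\<close> from it.\<close>
lemma pam_not_nearest_imp_far:
  assumes "\<not> (\<forall>j<M. j \<noteq> k \<longrightarrow> \<bar>th - pam M k\<bar> < \<bar>th - pam M j\<bar>)"
  shows "sqrt (3 / ((real M)\<^sup>2 - 1)) \<le> \<bar>th - pam M k\<bar>"
proof -
  define \<eta> where "\<eta> = sqrt (3 / ((real M)\<^sup>2 - 1))"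
  obtain j where j: "j \<noteq> k" "\<bar>th - pam M j\<bar> \<le> \<bar>th - pam M k\<bar>" using assms by auto
  have "2 * \<eta> \<le> \<bar>pam M k - pam M j\<bar>"
  proof (cases "\<eta> \<ge> 0")
    case True
    have "1 \<le> \<bar>real k - real j\<bar>" using j(1) by linarith
    then show ?thesis
      using mult_right_mono[OF _ True] True unfolding pam_diff \<eta>_def[symmetric] abs_mult by simp
  qed simp
  also have "\<dots> \<le> \<bar>th - pam M k\<bar> + \<bar>th - pam M j\<bar>" by simp
  finally show ?thesis using j(2) unfolding \<eta>_def by simp
qed

section \<open>Aliasing and error probabilities\<close>

lemma (in finite_measure) measure_le_union_bound:
  assumes "finite I" "\<And>i. i \<in> I \<Longrightarrow> A i \<in> sets M" "B \<in> sets M" "E \<subseteq> (\<Union>i\<in>I. A i) \<union> B"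
  shows "measure M E \<le> (\<Sum>i\<in>I. measure M (A i)) + measure M B"
proof -
  have "measure M E \<le> measure M ((\<Union>i\<in>I. A i) \<union> B)"
  proof (cases "E \<in> sets M")
    case True
    then show ?thesis using assms by (intro finite_measure_mono) (auto intro!: sets.Un sets.finite_UN)
  qed (simp add: measure_notin_sets)
  also have "\<dots> \<le> measure M (\<Union>i\<in>I. A i) + measure M B"
    using assms by (intro measure_Un_le) auto
  also have "measure M (\<Union>i\<in>I. A i) \<le> (\<Sum>i\<in>I. measure M (A i))"
    using assms by (intro finite_measure_subadditive_finite) auto
  finally show ?thesis by simp
qed

lemma prob_space_scheme_space:
  assumes "M > 0" "Pt > 0" "\<sigma> > 0" "\<sigma>t > 0"
  shows "prob_space (scheme_space M N Pt \<sigma> \<sigma>t)"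
  unfolding scheme_space_def using assms
  by (intro prob_space_pair prob_space_PiM prob_space_uniform_count_measure
      prob_space_uniform_measure prob_space_normal_density) (auto simp: dmod_def)

definition noise_rv :: "nat \<Rightarrow> (nat \<Rightarrow> real) \<Rightarrow> (nat \<Rightarrow> real)
    \<Rightarrow> nat \<times> (nat \<Rightarrow> real) \<times> (nat \<Rightarrow> real) \<times> (nat \<Rightarrow> real) \<Rightarrow> real" where
  "noise_rv N c e \<omega> = (case \<omega> of (k, v, z, zt) \<Rightarrow> noise_comb N c e z zt)"

lemma (in scheme_parameters) centered_normal_noise_rv:
  assumes "M > 0"
  shows "centered_normal (scheme_space M N Pt \<sigma> \<sigma>t) (noise_rv N c e) (sqrt (noise_var N c e))"
proof -
  let ?U = "uniform_count_measure {..<M}"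
  let ?V = "PiM {1..<N} (\<lambda>_. uniform_measure lborel {- dmod Pt / 2..<dmod Pt / 2})"
  let ?Z = "PiM {1..N} (\<lambda>_. density lborel (normal_density 0 \<sigma>))"
  let ?W = "PiM {1..<N} (\<lambda>_. density lborel (normal_density 0 \<sigma>t))"
  have pU: "prob_space ?U" using assms by (intro prob_space_uniform_count_measure) auto
  have pV: "prob_space ?V" using Pt_pos
    by (intro prob_space_PiM prob_space_uniform_measure) (auto simp: dmod_def)
  have pZ: "prob_space ?Z" and pW: "prob_space ?W" using \<sigma>_pos \<sigma>t_pos
    by (auto intro!: prob_space_PiM prob_space_normal_density)
  have "centered_normal (?Z \<Otimes>\<^sub>M ?W)
      (\<lambda>p. (\<Sum>i\<in>{1..N}. c i * fst p i) + (\<Sum>j\<in>{1..<N}. e j * snd p j))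
      (sqrt ((sqrt (\<Sum>i\<in>{1..N}. (c i)\<^sup>2 * \<sigma>\<^sup>2))\<^sup>2 + (sqrt (\<Sum>j\<in>{1..<N}. (e j)\<^sup>2 * \<sigma>t\<^sup>2))\<^sup>2))"
    using \<sigma>_pos \<sigma>t_pos by (intro centered_normal_pair_add pZ pW centered_normal_PiM_lincomb) auto
  then have "centered_normal (?Z \<Otimes>\<^sub>M ?W) (\<lambda>p. noise_comb N c e (fst p) (snd p)) (sqrt (noise_var N c e))"
    by (simp add: noise_comb_def noise_var_def sum_nonneg)
  then have "centered_normal (?V \<Otimes>\<^sub>M (?Z \<Otimes>\<^sub>M ?W)) (\<lambda>q. noise_comb N c e (fst (snd q)) (snd (snd q)))
      (sqrt (noise_var N c e))"
    using centered_normal_distr[OF measurable_snd prob_space.distr_pair_snd[OF pV prob_space_pair[OF pZ pW]]]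
    by blast
  then have "centered_normal (scheme_space M N Pt \<sigma> \<sigma>t)
      (\<lambda>\<omega>. noise_comb N c e (fst (snd (snd \<omega>))) (snd (snd (snd \<omega>)))) (sqrt (noise_var N c e))"
    unfolding scheme_space_def
    using centered_normal_distr[OF measurable_snd
        prob_space.distr_pair_snd[OF pU prob_space_pair[OF pV prob_space_pair[OF pZ pW]]]]
    by blast
  then show ?thesis
    by (rule centered_normal_cong) (auto simp: noise_rv_def split: prod.splits)
qed

context scheme_parameters
begin

context
  fixes M N :: nat
  assumes M_gt_1: "M > 1" and N_pos: "N \<ge> 1"
begin

abbreviation "\<Omega> \<equiv> scheme_space M N Pt \<sigma> \<sigma>t"

interpretation \<Omega>: prob_space \<Omega>
  using M_gt_1 P_pos Pt_pos \<sigma>_pos \<sigma>t_pos by (intro prob_space_scheme_space) auto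

lemma centered_normal_alias_argument:
  "n \<in> {1..<N} \<Longrightarrow> centered_normal \<Omega> (noise_rv N (alias_fwd_coeff n) (alias_fb_coeff n)) (sqrt (Pt / L))"
  using centered_normal_noise_rv[of M N "alias_fwd_coeff n" "alias_fb_coeff n"] M_gt_1
    noise_var_alias[of n N] by simp

lemma alias_event_eq:
  assumes "n \<in> {1..<N}"
  shows "alias_event M N P \<sigma> Pt \<sigma>t L n
    = {\<omega>\<in>space \<Omega>. noise_rv N (alias_fwd_coeff n) (alias_fb_coeff n) \<omega> \<notin> {- dmod Pt / 2..<dmod Pt / 2}}"
  unfolding alias_event_def using alias_argument_eq[OF assms]
  by (auto simp: noise_rv_def split: prod.splits)

lemma alias_event_sets: "n \<in> {1..<N} \<Longrightarrow> alias_event M N P \<sigma> Pt \<sigma>t L n \<in> sets \<Omega>"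
  unfolding alias_event_eq
  using centered_normal_measurable[OF centered_normal_alias_argument] by measurable

lemma measure_alias_event:
  assumes "n \<in> {1..<N}"
  shows "measure \<Omega> (alias_event M N P \<sigma> Pt \<sigma>t L n) = 2 * Qfun (sqrt (3 * L))"
proof -
  have "dmod Pt / 2 = sqrt (2\<^sup>2 * (3 * Pt)) / 2" by (simp add: dmod_def)
  then have "dmod Pt / 2 = sqrt (3 * Pt)" by (simp only: real_sqrt_mult) simp
  then have "dmod Pt / 2 / sqrt (Pt / L) = sqrt (3 * Pt / (Pt / L))" by (simp only: real_sqrt_divide)
  also have "3 * Pt / (Pt / L) = 3 * L" using Pt_pos by simp
  finally have "dmod Pt / 2 / sqrt (Pt / L) = sqrt (3 * L)" .
  moreover have "dmod Pt / 2 > 0" "sqrt (Pt / L) > 0" using Pt_pos L_pos by (auto simp: dmod_def)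
  ultimately show ?thesis
    unfolding alias_event_eq[OF assms]
    using \<Omega>.prob_centered_normal_outside[OF centered_normal_alias_argument[OF assms], of "dmod Pt / 2"]
    by simp
qed

definition "final_error = noise_rv N (fwd_coeff (N - 1)) (fb_coeff (N - 1))"
definition "far_event = {\<omega>\<in>space \<Omega>. sqrt (3 / ((real M)\<^sup>2 - 1)) \<le> \<bar>final_error \<omega>\<bar>}"

lemma centered_normal_final_error: "centered_normal \<Omega> final_error (sdev N)"
proof -
  have N: "N - 1 < N" "Suc (N - 1) = N" using N_pos by auto
  then show ?thesis
    unfolding final_error_def
    using centered_normal_noise_rv[of M N "fwd_coeff (N - 1)" "fb_coeff (N - 1)"] M_gt_1
      noise_var_coeff[OF N(1), unfolded N(2)] sdev_pos[of N] by simp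
qed

lemma far_event_sets: "far_event \<in> sets \<Omega>"
  unfolding far_event_def using centered_normal_measurable[OF centered_normal_final_error] by measurable

lemma measure_far_event:
  "measure \<Omega> far_event = 2 * Qfun (sqrt (3 / ((real M)\<^sup>2 - 1)) / sdev N)"
proof -
  have "(real M)\<^sup>2 > 1" using M_gt_1 by (simp add: one_less_power)
  then show ?thesis unfolding far_event_def
    by (intro \<Omega>.prob_centered_normal_abs_ge centered_normal_final_error sdev_pos) simp
qed

lemma error_event_subset:
  "error_event M N P \<sigma> Pt \<sigma>t L \<subseteq> (\<Union>n\<in>{1..<N}. alias_event M N P \<sigma> Pt \<sigma>t L n) \<union> far_event"
proof
  fix \<omega> assume \<omega>: "\<omega> \<in> error_event M N P \<sigma> Pt \<sigma>t L"
  obtain k v z zt where \<omega>_eq: "\<omega> = (k, v, z, zt)" by (cases \<omega>) auto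
  show "\<omega> \<in> (\<Union>n\<in>{1..<N}. alias_event M N P \<sigma> Pt \<sigma>t L n) \<union> far_event"
  proof (cases "\<omega> \<in> (\<Union>n\<in>{1..<N}. alias_event M N P \<sigma> Pt \<sigma>t L n)")
    case False
    then have "\<forall>n\<in>{1..<N}. \<gamma> n * (ThetaHat id P \<sigma> Pt \<sigma>t L (pam M k) v z zt n - pam M k) + zt n
        \<in> {- dmod Pt / 2..<dmod Pt / 2}"
      using \<omega> unfolding alias_event_def error_event_def \<omega>_eq by auto
    then have "ThetaHat (modd (dmod Pt)) P \<sigma> Pt \<sigma>t L (pam M k) v z zt N - pam M k = final_error \<omega>"
      using N_pos est_modd_eq_est_id[of N] est_id_error[of "N - 1" N]
      by (simp add: ThetaHat_def final_error_def noise_rv_def \<omega>_eq)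
    moreover have "sqrt (3 / ((real M)\<^sup>2 - 1))
        \<le> \<bar>ThetaHat (modd (dmod Pt)) P \<sigma> Pt \<sigma>t L (pam M k) v z zt N - pam M k\<bar>"
      using \<omega> unfolding error_event_def \<omega>_eq by (intro pam_not_nearest_imp_far) (simp add: Let_def)
    ultimately show ?thesis using \<omega> by (simp add: far_event_def error_event_def)
  qed blast
qed

lemma pam_spacing_div_sdev:
  "sqrt (3 / ((real M)\<^sup>2 - 1)) / sdev N = sqrt (3 * (snr P \<sigma> * G ^ (N - 1)) / ((real M)\<^sup>2 - 1))"
proof -
  have "G powr (1 - real N) = inverse (G powr real (N - 1))"
    using N_pos by (simp add: powr_minus[symmetric] of_nat_diff)
  also have "G powr real (N - 1) = G ^ (N - 1)"
    using gfac_gt_1 by (simp add: powr_realpow)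
  finally have "(sdev N)\<^sup>2 = inverse (r * G ^ (N - 1))" by (simp add: sdev_sq)
  then have "3 / ((real M)\<^sup>2 - 1) / (sdev N)\<^sup>2 = 3 * (r * G ^ (N - 1)) / ((real M)\<^sup>2 - 1)"
    by (simp add: divide_inverse)
  moreover have "sqrt (3 / ((real M)\<^sup>2 - 1)) / sdev N = sqrt (3 / ((real M)\<^sup>2 - 1) / (sdev N)\<^sup>2)"
    unfolding real_sqrt_divide[of _ "(sdev N)\<^sup>2"] using sdev_pos[of N] by simp
  ultimately show ?thesis by (simp add: r_def)
qed

end

end

theorem mainTheorem4:
  fixes P \<sigma> Pt \<sigma>t L R :: real and N M :: nat
  assumes "P > 0" "\<sigma> > 0" "Pt > 0" "\<sigma>t > 0"
    and "0 < L" "L < snr Pt \<sigma>t"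
    and "N \<ge> 1" "R > 0" "real M = 2 powr (real N * R)"
  shows "(\<forall>n \<in> {1..<N}.
            measure (scheme_space M N Pt \<sigma> \<sigma>t) (alias_event M N P \<sigma> Pt \<sigma>t L n)
              = 2 * Qfun (sqrt (3 * L)))
       \<and> measure (scheme_space M N Pt \<sigma> \<sigma>t) (error_event M N P \<sigma> Pt \<sigma>t L)
           \<le> real (N - 1) * (2 * Qfun (sqrt (3 * L)))
             + 2 * Qfun (sqrt (3 * (snr P \<sigma> * gfac P \<sigma> Pt \<sigma>t L ^ (N - 1))
                               / (2 powr (2 * real N * R) - 1)))"
proof -
  interpret scheme_parameters P \<sigma> Pt \<sigma>t L using assms by unfold_locales
  have "real N * R > 0" using assms(7,8) by simp
  then have "real M > 1" using assms(9) by simp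
  then have M: "M > 1" by simp
  have M_sq: "(real M)\<^sup>2 = 2 powr (2 * real N * R)"
    unfolding assms(9) power2_eq_square by (simp add: powr_add[symmetric] ac_simps)
  interpret \<Omega>: prob_space "scheme_space M N Pt \<sigma> \<sigma>t"
    using M assms(1-4) by (intro prob_space_scheme_space) auto
  have alias_prob: "measure (scheme_space M N Pt \<sigma> \<sigma>t) (alias_event M N P \<sigma> Pt \<sigma>t L n) = 2 * Qfun (sqrt (3 * L))"
    if "n \<in> {1..<N}" for n
    using measure_alias_event[OF M assms(7) that] .
  have "measure (scheme_space M N Pt \<sigma> \<sigma>t) (error_event M N P \<sigma> Pt \<sigma>t L)
      \<le> (\<Sum>n\<in>{1..<N}. measure (scheme_space M N Pt \<sigma> \<sigma>t) (alias_event M N P \<sigma> Pt \<sigma>t L n))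
        + measure (scheme_space M N Pt \<sigma> \<sigma>t) (far_event M N)"
    using alias_event_sets[OF M assms(7)] far_event_sets[OF M assms(7)] error_event_subset[OF M assms(7)]
    by (intro \<Omega>.measure_le_union_bound) auto
  also have "\<dots> = real (N - 1) * (2 * Qfun (sqrt (3 * L)))
      + 2 * Qfun (sqrt (3 * (snr P \<sigma> * gfac P \<sigma> Pt \<sigma>t L ^ (N - 1)) / (2 powr (2 * real N * R) - 1)))"
    using alias_prob measure_far_event[OF M assms(7)] pam_spacing_div_sdev[OF M assms(7)] by (simp add: M_sq)
  finally show ?thesis using alias_prob by blast
qed

end
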